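(* Let $\Phi:\mathbb R^{d_0}\to\mathbb R^{d_{L+1}}$ be a feedforward neural network with continuous activation $\sigma$, let $\Sigma$ be an interval enclosure of $\sigma$ that is Hölder continuous on $\mathbb{IR}$, let $1\le p<\infty$, $\theta,\rho\in(0,1)$ and $\Omega\in\mathbb{IR}^{d_0}$ a box with nonempty interior. Let $f_{\Phi,0,p}(x)=\sum_{i=1}^{d_{L+1}}|\Phi_i(x)|^p$ and $F_{\Phi,0,p}(K)=\sum_{i=1}^{d_{L+1}}|\mathrm{Fval}_{\Phi,L+1,\Sigma}(K)_i|^p$. Then $f_{\Phi,0,p}$ is continuous, $F_{\Phi,0,p}$ is a Hölder continuous interval enclosure of $f_{\Phi,0,p}$ on $\Omega$, and running AdaQuad with integrand $f_{\Phi,0,p}$, enclosure $F_{\Phi,0,p}$, a positive-weight quadrature rule exact for constants, marking $\mathrm{D\ddot orfler}_\theta$ and refinement $\mathrm{H\ddot older}_\rho$ (with a Hölder constant and exponent of $F_{\Phi,0,p}$) yields, for all $n\in\mathbb N$, $$\big|\,\|\Phi\|_{L^p(\Omega;\mathbb R^{d_{L+1}})}-\mathrm Q_n^{1/p}\big|\le\eta_n^{1/p},\qquad \eta_{n+1}\le(1-\theta(1-\rho))\eta_n.$$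
   Context: $\|\Phi\|_{L^p(\Omega;\mathbb R^m)}=(\sum_{i=1}^m\int_\Omega|\Phi_i|^p\,dx)^{1/p}$. Intervals, boxes, interval arithmetic $X\circ Y=\{x\circ y\}$, width $w$ (max entry width for vectors), $|X|=\{|x|:x\in X\}$, $X^\gamma=[\underline X^\gamma,\overline X^\gamma]$ for $\underline X\ge0$. Interval enclosure of $\phi$ on $\Omega$: inclusion isotonic $F$ on boxes $K\subset\Omega$ with $\phi(K)\subset F(K)$; Hölder continuous: $w(F(K))\le Cw(K)^\gamma$ for all boxes $K\subset\Omega$, some $C>0$, $\gamma\in(0,1]$. Neural network: weights $W^{(\ell)}$, biases $b^{(\ell)}$, $z^{(\ell)}=W^{(\ell-1)}x^{(\ell-1)}+b^{(\ell-1)}$, $x^{(\ell)}=\sigma(z^{(\ell)})$, $x^{(0)}=u$, $\Phi=z^{(L+1)}$. $\mathrm{Fval}_{\Phi,\ell,\Sigma}(K)$: $X^{(0)}=K$; for $k=0,\dots,\ell-1$: $Z^{(k+1)}=W^{(k)}X^{(k)}+b^{(k)}$ (interval arithmetic), $X^{(k+1)}=\Sigma(Z^{(k+1)})$; return $Z^{(\ell)}$; subscript $i$ denotes the $i$-th component interval. AdaQuad: $\mathcal P_0=\{\Omega\}$; with $\eta_K=w(F(K))\mathrm{vol}(K)$, $\mathcal P_{n+1}=(\mathcal P_n\setminus\widetilde{\mathcal P}_n)\cup\bigcup_{K\in\widetilde{\mathcal P}_n}\mathcal R(K)$ where $\widetilde{\mathcal P}_n$ is the marked set; $\mathrm Q_n=\sum_{K\in\mathcal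 P_n}\mathcal I(f,K)$, $\eta_n=\sum_{K\in\mathcal P_n}\eta_K$. Quadrature rule $\mathcal I(f,K)=\sum_iw_if(x_i)$, $x_i\in K$, $w_i>0$, $\sum_iw_i=\mathrm{vol}(K)$. $\mathrm{D\ddot orfler}_\theta$: repeatedly mark all unmarked elements with maximal indicator until marked sum $\ge\theta$ times total. $\mathrm{H\ddot older}_\rho(K)$ with constant $C$, exponent $\gamma$: if $\eta_K=0$ return $\{K\}$; else split each side $K_i$ (length $l_i$) uniformly into $m_i=\lceil l_i(C\mathrm{vol}(K)/(\rho\eta_K))^{1/\gamma}\rceil$ pieces and return all product boxes. *)

theory Defs
  imports "HOL-Analysis.Analysis" "HOL-Library.Interval"
begin

type_synonym box = "real interval list"
type_synonym rvec = "nat \<Rightarrow> real"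

text \<open>Points of R^d are functions nat => real (coordinates j < d); the box K
  is the set of points whose j-th coordinate lies in the j-th interval.\<close>
definition set_box :: "box \<Rightarrow> rvec set" where
  "set_box K = (\<Pi>\<^sub>E j\<in>{..<length K}. set_of (K ! j))"

definition vol :: "box \<Rightarrow> real" where
  "vol K = (\<Prod>j<length K. width (K ! j))"

definition box_width :: "box \<Rightarrow> real" where
  "box_width K = Max (insert 0 (width ` set K))"

definition subbox :: "nat \<Rightarrow> box \<Rightarrow> box \<Rightarrow> bool" where
  "subbox dm \<Omega> K \<longleftrightarrow> length K = dm \<and> set_box K \<subseteq> set_box \<Omega>"

definition box_enclosure :: "nat \<Rightarrow> box \<Rightarrow> (rvec \<Rightarrow> real) \<Rightarrow> (box \<Rightarrow> real interval) \<Rightarrow> bool" where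
  "box_enclosure dm \<Omega> \<phi> F \<longleftrightarrow>
     (\<forall>K K'. subbox dm \<Omega> K \<longrightarrow> subbox dm \<Omega> K' \<longrightarrow> set_box K \<subseteq> set_box K'
        \<longrightarrow> set_of (F K) \<subseteq> set_of (F K')) \<and>
     (\<forall>K. subbox dm \<Omega> K \<longrightarrow> \<phi> ` set_box K \<subseteq> set_of (F K))"

definition box_holder :: "nat \<Rightarrow> box \<Rightarrow> (box \<Rightarrow> real interval) \<Rightarrow> real \<Rightarrow> real \<Rightarrow> bool" where
  "box_holder dm \<Omega> F C \<gamma> \<longleftrightarrow>
     (\<forall>K. subbox dm \<Omega> K \<longrightarrow> width (F K) \<le> C * box_width K powr \<gamma>)"

definition real_enclosure :: "(real \<Rightarrow> real) \<Rightarrow> (real interval \<Rightarrow> real interval) \<Rightarrow> bool" where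
  "real_enclosure \<sigma> \<Sigma> \<longleftrightarrow>
     (\<forall>X Y. set_of X \<subseteq> set_of Y \<longrightarrow> set_of (\<Sigma> X) \<subseteq> set_of (\<Sigma> Y)) \<and>
     (\<forall>X. \<sigma> ` set_of X \<subseteq> set_of (\<Sigma> X))"

definition real_holder :: "(real interval \<Rightarrow> real interval) \<Rightarrow> real \<Rightarrow> real \<Rightarrow> bool" where
  "real_holder \<Sigma> C \<gamma> \<longleftrightarrow> (\<forall>X. width (\<Sigma> X) \<le> C * width X powr \<gamma>)"

text \<open>X^gamma = [lower X ^ gamma, upper X ^ gamma] (used for X >= 0)\<close>
definition ipowr :: "real interval \<Rightarrow> real \<Rightarrow> real interval" where
  "ipowr X g = Ivl (lower X powr g) (upper X powr g)"

text \<open>Network data: L, widths d k (d 0 = input dm, d (L+1) = output dm),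
  weights W k i j (i < d (k+1), j < d k), biases b k i (i < d (k+1)).\<close>
definition affine :: "(nat \<Rightarrow> nat \<Rightarrow> nat \<Rightarrow> real) \<Rightarrow> (nat \<Rightarrow> nat \<Rightarrow> real) \<Rightarrow> (nat \<Rightarrow> nat)
    \<Rightarrow> nat \<Rightarrow> rvec \<Rightarrow> rvec" where
  "affine W b d k x = (\<lambda>i. (\<Sum>j<d k. W k i j * x j) + b k i)"

primrec nn_x :: "(real \<Rightarrow> real) \<Rightarrow> (nat \<Rightarrow> nat \<Rightarrow> nat \<Rightarrow> real) \<Rightarrow> (nat \<Rightarrow> nat \<Rightarrow> real)
    \<Rightarrow> (nat \<Rightarrow> nat) \<Rightarrow> nat \<Rightarrow> rvec \<Rightarrow> rvec" where
  "nn_x \<sigma> W b d 0 u = u"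
| "nn_x \<sigma> W b d (Suc k) u = (\<lambda>i. \<sigma> (affine W b d k (nn_x \<sigma> W b d k u) i))"

definition nn :: "(real \<Rightarrow> real) \<Rightarrow> (nat \<Rightarrow> nat \<Rightarrow> nat \<Rightarrow> real) \<Rightarrow> (nat \<Rightarrow> nat \<Rightarrow> real)
    \<Rightarrow> (nat \<Rightarrow> nat) \<Rightarrow> nat \<Rightarrow> rvec \<Rightarrow> rvec" where
  "nn \<sigma> W b d L u = affine W b d L (nn_x \<sigma> W b d L u)"

definition iaffine :: "(nat \<Rightarrow> nat \<Rightarrow> nat \<Rightarrow> real) \<Rightarrow> (nat \<Rightarrow> nat \<Rightarrow> real) \<Rightarrow> (nat \<Rightarrow> nat)
    \<Rightarrow> nat \<Rightarrow> (nat \<Rightarrow> real interval) \<Rightarrow> (nat \<Rightarrow> real interval)" where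
  "iaffine W b d k X = (\<lambda>i. (\<Sum>j<d k. interval_of (W k i j) * X j) + interval_of (b k i))"

primrec ival_x :: "(real interval \<Rightarrow> real interval) \<Rightarrow> (nat \<Rightarrow> nat \<Rightarrow> nat \<Rightarrow> real) \<Rightarrow> (nat \<Rightarrow> nat \<Rightarrow> real)
    \<Rightarrow> (nat \<Rightarrow> nat) \<Rightarrow> nat \<Rightarrow> box \<Rightarrow> (nat \<Rightarrow> real interval)" where
  "ival_x \<Sigma> W b d 0 K = (\<lambda>j. K ! j)"
| "ival_x \<Sigma> W b d (Suc k) K = (\<lambda>i. \<Sigma> (iaffine W b d k (ival_x \<Sigma> W b d k K) i))"

text \<open>Fval_{Phi,l,Sigma}(K) = Z^(l)  (for l >= 1)\<close>
definition Fval :: "(real interval \<Rightarrow> real interval) \<Rightarrow> (nat \<Rightarrow> nat \<Rightarrow> nat \<Rightarrow> real) \<Rightarrow> (nat \<Rightarrow> nat \<Rightarrow> real)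
    \<Rightarrow> (nat \<Rightarrow> nat) \<Rightarrow> nat \<Rightarrow> box \<Rightarrow> (nat \<Rightarrow> real interval)" where
  "Fval \<Sigma> W b d l K = iaffine W b d (l - 1) (ival_x \<Sigma> W b d (l - 1) K)"

definition f_Phi :: "(real \<Rightarrow> real) \<Rightarrow> (nat \<Rightarrow> nat \<Rightarrow> nat \<Rightarrow> real) \<Rightarrow> (nat \<Rightarrow> nat \<Rightarrow> real)
    \<Rightarrow> (nat \<Rightarrow> nat) \<Rightarrow> nat \<Rightarrow> real \<Rightarrow> rvec \<Rightarrow> real" where
  "f_Phi \<sigma> W b d L p x = (\<Sum>i<d (Suc L). \<bar>nn \<sigma> W b d L x i\<bar> powr p)"

definition F_Phi :: "(real interval \<Rightarrow> real interval) \<Rightarrow> (nat \<Rightarrow> nat \<Rightarrow> nat \<Rightarrow> real) \<Rightarrow> (nat \<Rightarrow> nat \<Rightarrow> real)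
    \<Rightarrow> (nat \<Rightarrow> nat) \<Rightarrow> nat \<Rightarrow> real \<Rightarrow> box \<Rightarrow> real interval" where
  "F_Phi \<Sigma> W b d L p K = (\<Sum>i<d (Suc L). ipowr (abs_interval (Fval \<Sigma> W b d (Suc L) K i)) p)"

definition lebesgue_d :: "nat \<Rightarrow> rvec measure" where
  "lebesgue_d dm = (\<Pi>\<^sub>M j\<in>{..<dm}. lborel)"

definition Lp_norm_nn :: "(real \<Rightarrow> real) \<Rightarrow> (nat \<Rightarrow> nat \<Rightarrow> nat \<Rightarrow> real) \<Rightarrow> (nat \<Rightarrow> nat \<Rightarrow> real)
    \<Rightarrow> (nat \<Rightarrow> nat) \<Rightarrow> nat \<Rightarrow> real \<Rightarrow> box \<Rightarrow> real" where
  "Lp_norm_nn \<sigma> W b d L p \<Omega> =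
     (\<Sum>i<d (Suc L). (LINT x:set_box \<Omega>|lebesgue_d (d 0). \<bar>nn \<sigma> W b d L x i\<bar> powr p)) powr (1 / p)"

definition quad :: "(box \<Rightarrow> (real \<times> rvec) list) \<Rightarrow> (rvec \<Rightarrow> real) \<Rightarrow> box \<Rightarrow> real" where
  "quad rule f K = (\<Sum>(w, x)\<leftarrow>rule K. w * f x)"

definition valid_quad_rule :: "nat \<Rightarrow> (box \<Rightarrow> (real \<times> rvec) list) \<Rightarrow> bool" where
  "valid_quad_rule dm rule \<longleftrightarrow>
     (\<forall>K. length K = dm \<longrightarrow>
        (\<forall>(w, x) \<in> set (rule K). w > 0 \<and> x \<in> set_box K) \<and>
        (\<Sum>(w, x)\<leftarrow>rule K. w) = vol K)"

definition eta :: "(box \<Rightarrow> real interval) \<Rightarrow> box \<Rightarrow> real" where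
  "eta F K = width (F K) * vol K"

text \<open>Doerfler marking: repeatedly mark all unmarked elements with maximal
  indicator, until the marked sum is at least theta times the total.\<close>
definition dorfler_step :: "(box \<Rightarrow> real) \<Rightarrow> box set \<Rightarrow> box set \<Rightarrow> box set" where
  "dorfler_step \<eta> P M = M \<union> {K \<in> P - M. \<eta> K = Max (\<eta> ` (P - M))}"

definition dorfler :: "real \<Rightarrow> (box \<Rightarrow> real) \<Rightarrow> box set \<Rightarrow> box set" where
  "dorfler \<theta> \<eta> P =
     (dorfler_step \<eta> P ^^
        (LEAST k. \<theta> * sum \<eta> P \<le> sum \<eta> ((dorfler_step \<eta> P ^^ k) {}))) {}"

text \<open>Hoelder refinement: split side i uniformly into m_i pieces.\<close>
definition piece :: "real interval \<Rightarrow> nat \<Rightarrow> nat \<Rightarrow> real interval" where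
  "piece X m k = Ivl (lower X + real k * width X / real m) (lower X + real (Suc k) * width X / real m)"

definition holder_refine :: "real \<Rightarrow> real \<Rightarrow> real \<Rightarrow> real \<Rightarrow> box \<Rightarrow> box set" where
  "holder_refine C \<gamma> \<rho> etaK K =
     (if etaK = 0 then {K}
      else (let m = (\<lambda>i. nat \<lceil>width (K ! i) * (C * vol K / (\<rho> * etaK)) powr (1 / \<gamma>)\<rceil>)
            in {K'. length K' = length K \<and>
                    (\<forall>i<length K. \<exists>k<m i. K' ! i = piece (K ! i) (m i) k)}))"

primrec adaquad_P :: "(box \<Rightarrow> real interval) \<Rightarrow> real \<Rightarrow> real \<Rightarrow> real \<Rightarrow> real \<Rightarrow> box \<Rightarrow> nat \<Rightarrow> box set" where
  "adaquad_P F \<theta> \<rho> C \<gamma> \<Omega> 0 = {\<Omega>}"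
| "adaquad_P F \<theta> \<rho> C \<gamma> \<Omega> (Suc n) =
     (let P = adaquad_P F \<theta> \<rho> C \<gamma> \<Omega> n; M = dorfler \<theta> (eta F) P
      in (P - M) \<union> (\<Union>K\<in>M. holder_refine C \<gamma> \<rho> (eta F K) K))"

definition adaquad_Q :: "(rvec \<Rightarrow> real) \<Rightarrow> (box \<Rightarrow> real interval) \<Rightarrow> (box \<Rightarrow> (real \<times> rvec) list)
    \<Rightarrow> real \<Rightarrow> real \<Rightarrow> real \<Rightarrow> real \<Rightarrow> box \<Rightarrow> nat \<Rightarrow> real" where
  "adaquad_Q f F rule \<theta> \<rho> C \<gamma> \<Omega> n = (\<Sum>K\<in>adaquad_P F \<theta> \<rho> C \<gamma> \<Omega> n. quad rule f K)"

definition adaquad_eta :: "(box \<Rightarrow> real interval) \<Rightarrow> real \<Rightarrow> real \<Rightarrow> real \<Rightarrow> real \<Rightarrow> box \<Rightarrow> nat \<Rightarrow> real" where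
  "adaquad_eta F \<theta> \<rho> C \<gamma> \<Omega> n = (\<Sum>K\<in>adaquad_P F \<theta> \<rho> C \<gamma> \<Omega> n. eta F K)"

end

theory Submission
  imports Defs
begin

text \<open>The interval evaluation \<open>F\<close> of the network encloses \<open>f = \<Sum>\<^sub>i |Phi\<^sub>i|\<^sup>p\<close>
  because interval arithmetic is inclusion isotonic, and it is Hoelder continuous because
  the affine layers are Lipschitz in the interval widths, the activation enclosure is
  Hoelder, and \<open>t \<mapsto> t\<^sup>p\<close> is Lipschitz on the bounded range \<open>F(\<Omega>)\<close>.

  On a box \<open>K\<close> both the integral of \<open>f\<close> and its quadrature with positive weights lie in
  \<open>vol K * F(K)\<close>, so they differ by at most \<open>\<eta>\<^sub>K\<close>; summing over the current
  partition gives \<open>|\<integral>\<^sub>\<Omega> f - Q\<^sub>n| \<le> \<eta>\<^sub>n\<close>, and the subadditivity of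
  \<open>t \<mapsto> t\<^sup>1\<^sup>/\<^sup>p\<close> transfers this bound to the \<open>L\<^sup>p\<close> norm.

  The Hoelder refinement cuts \<open>K\<close> so finely that every child carries at most
  \<open>\<rho> \<eta>\<^sub>K / vol K\<close> per unit volume, so the children of \<open>K\<close> carry at most \<open>\<rho> \<eta>\<^sub>K\<close>.
  Doerfler marking refines boxes carrying a \<open>\<theta>\<close>-fraction of \<open>\<eta>\<^sub>n\<close>, whence
  \<open>\<eta>\<^sub>n\<^sub>+\<^sub>1 \<le> \<eta>\<^sub>n - (1 - \<rho>) \<theta> \<eta>\<^sub>n\<close>.\<close>

section \<open>Interval arithmetic\<close>

lemma set_of_sum_inc:
  fixes X Y :: "'i \<Rightarrow> real interval"
  shows "(\<And>i. i \<in> A \<Longrightarrow> set_of (X i) \<subseteq> set_of (Y i)) \<Longrightarrow> set_of (sum X A) \<subseteq> set_of (sum Y A)"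
  by (induction A rule: infinite_finite_induct) (auto simp: set_of_add_inc)

lemma sum_in_intervalI:
  fixes x :: "'i \<Rightarrow> real" and X :: "'i \<Rightarrow> real interval"
  shows "(\<And>i. i \<in> A \<Longrightarrow> x i \<in> set_of (X i)) \<Longrightarrow> sum x A \<in> set_of (sum X A)"
  by (induction A rule: infinite_finite_induct) (auto simp: set_of_eq intro: add_mono)

lemma lower_Ivl: "(a::real) \<le> b \<Longrightarrow> lower (Ivl a b) = a"
  by (simp add: lower.rep_eq Ivl.rep_eq min_def)

lemma upper_Ivl: "upper (Ivl (a::real) b) = b"
  by (simp add: upper.rep_eq Ivl.rep_eq)

lemma set_of_subset_lower_le: "set_of X \<subseteq> set_of Y \<Longrightarrow> lower Y \<le> lower (X::real interval)"
  by (metis atLeastAtMost_iff lower_le_upper order_refl set_of_eq subsetD)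

lemma set_of_subset_upper_le: "set_of X \<subseteq> set_of Y \<Longrightarrow> upper X \<le> upper (Y::real interval)"
  by (metis atLeastAtMost_iff lower_le_upper order_refl set_of_eq subsetD)

lemma set_of_abs_interval_inc:
  "set_of X \<subseteq> set_of Y \<Longrightarrow> set_of (abs_interval X) \<subseteq> set_of (abs_interval (Y::real interval))"
  by (auto simp: set_of_abs_interval)

lemma width_nonneg: "0 \<le> width (X::real interval)"
  by (simp add: width_def)

lemma width_plus: "width (X + Y) = width X + width (Y::real interval)"
  by (simp add: width_def)

lemma width_sum: "width (sum X A) = (\<Sum>i\<in>A. width (X i :: real interval))"
  by (induction A rule: infinite_finite_induct) (auto simp: width_plus width_def)

lemma width_interval_of_times: "width (interval_of w * X) = \<bar>w\<bar> * width (X::real interval)"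
proof (cases "0 \<le> w")
  case True
  then have "w * lower X \<le> w * upper X" by (simp add: mult_left_mono)
  then show ?thesis
    using True by (simp add: width_def lower_times upper_times min_def max_def algebra_simps)
next
  case False
  then have "w * upper X \<le> w * lower X" by (simp add: mult_left_mono_neg)
  then show ?thesis
    using False by (simp add: width_def lower_times upper_times min_def max_def algebra_simps)
      (use lower_le_upper[of X] in linarith)
qed

lemma width_abs_interval_le: "width (abs_interval X) \<le> width (X::real interval)"
  unfolding width_def by (simp add: abs_if min_def max_def) (use lower_le_upper[of X] in linarith)

lemma lower_ipowr: "0 \<le> lower X \<Longrightarrow> 0 \<le> g \<Longrightarrow> lower (ipowr X g) = lower X powr g"
  unfolding ipowr_def by (rule lower_Ivl) (simp add: powr_mono2)

lemma upper_ipowr: "upper (ipowr X g) = upper X powr g"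
  unfolding ipowr_def by (rule upper_Ivl)

lemma set_of_ipowr_inc:
  assumes XY: "set_of X \<subseteq> set_of Y" and Y: "0 \<le> lower Y" and g: "0 \<le> g"
  shows "set_of (ipowr X g) \<subseteq> set_of (ipowr Y g)"
proof -
  have lo: "lower Y \<le> lower X" and up: "upper X \<le> upper Y"
    using XY by (auto intro: set_of_subset_lower_le set_of_subset_upper_le)
  have X: "0 \<le> lower X" using Y lo by linarith
  have "lower Y powr g \<le> lower X powr g" using Y lo g by (intro powr_mono2)
  moreover have "upper X powr g \<le> upper Y powr g"
    using X up g lower_le_upper[of X] by (intro powr_mono2) linarith+
  ultimately show ?thesis
    using X Y g by (auto simp: set_of_eq lower_ipowr upper_ipowr)
qed

lemma powr_in_ipowrI:
  "x \<in> set_of X \<Longrightarrow> 0 \<le> lower X \<Longrightarrow> 0 \<le> g \<Longrightarrow> x powr g \<in> set_of (ipowr X g)"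
  by (auto simp: set_of_eq lower_ipowr upper_ipowr intro!: powr_mono2)

lemma powr_diff_le:
  fixes l u M p :: real
  assumes "0 \<le> l" "l \<le> u" "u \<le> M" "1 \<le> p"
  shows "u powr p - l powr p \<le> p * M powr (p - 1) * (u - l)"
proof (cases "l = u")
  case False
  then have lu: "l < u" using assms by simp
  show ?thesis
  proof (cases "l = 0")
    case True
    have "u powr p = u powr (p - 1) * u"
      using assms lu by (simp add: powr_mult_base mult.commute)
    also have "\<dots> \<le> M powr (p - 1) * u"
      using assms lu by (intro mult_right_mono powr_mono2) auto
    also have "\<dots> \<le> p * M powr (p - 1) * u"
      using assms lu by (intro mult_right_mono) auto
    finally show ?thesis using True assms by simp
  next
    case False
    then have l0: "0 < l" using assms by simp
    have "\<exists>z. l < z \<and> z < u \<and> u powr p - l powr p = (u - l) * (p * z powr (p - 1))"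
      by (rule MVT2[OF lu]) (use l0 in \<open>auto intro!: has_real_derivative_powr\<close>)
    then obtain z where z: "l < z" "z < u" "u powr p - l powr p = (u - l) * (p * z powr (p - 1))"
      by blast
    have "z powr (p - 1) \<le> M powr (p - 1)" using z l0 assms by (intro powr_mono2) auto
    then have "(u - l) * (p * z powr (p - 1)) \<le> (u - l) * (p * M powr (p - 1))"
      using lu assms by (intro mult_left_mono) auto
    then show ?thesis using z by (simp add: algebra_simps)
  qed
qed simp

lemma width_ipowr_le:
  assumes "0 \<le> lower X" "upper X \<le> M" "1 \<le> p"
  shows "width (ipowr X p) \<le> p * M powr (p - 1) * width X"
  using powr_diff_le[OF assms(1) lower_le_upper assms(2,3)] assms
  by (simp add: width_def lower_ipowr upper_ipowr)

section \<open>Boxes and their Lebesgue measure\<close>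

lemma set_box_nth: "x \<in> set_box K \<Longrightarrow> j < length K \<Longrightarrow> x j \<in> set_of (K ! j)"
  unfolding set_box_def by auto

lemma set_box_mono:
  assumes "length K = length K'" "\<And>j. j < length K \<Longrightarrow> set_of (K ! j) \<subseteq> set_of (K' ! j)"
  shows "set_box K \<subseteq> set_box K'"
  using assms unfolding set_box_def by (auto simp: PiE_iff)

lemma set_box_subset_nth:
  assumes len: "length K = length K'" and KK': "set_box K \<subseteq> set_box K'" and j: "j < length K"
  shows "set_of (K ! j) \<subseteq> set_of (K' ! j)"
proof
  fix t assume t: "t \<in> set_of (K ! j)"
  define x where "x = restrict (\<lambda>i. if i = j then t else lower (K ! i)) {..<length K}"
  have "x \<in> set_box K" unfolding set_box_def x_def using t by (auto simp: set_of_eq)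
  then have "x j \<in> set_of (K' ! j)" using KK' len j by (auto intro: set_box_nth)
  then show "t \<in> set_of (K' ! j)" unfolding x_def using j by simp
qed

lemma width_le_box_width: "j < length K \<Longrightarrow> width (K ! j) \<le> box_width K"
  unfolding box_width_def by (intro Max_ge) auto

lemma box_width_nonneg: "0 \<le> box_width K"
  unfolding box_width_def by (intro Max_ge) auto

lemma vol_nonneg: "0 \<le> vol K"
  unfolding vol_def by (simp add: prod_nonneg width_nonneg)

definition nondegenerate_box :: "nat \<Rightarrow> box \<Rightarrow> bool" where
  "nondegenerate_box dm K \<longleftrightarrow> length K = dm \<and> (\<forall>j<dm. lower (K ! j) < upper (K ! j))"

lemma nondegenerate_box_width_pos: "nondegenerate_box dm K \<Longrightarrow> j < dm \<Longrightarrow> 0 < width (K ! j)"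
  by (simp add: nondegenerate_box_def width_def)

lemma nondegenerate_box_vol_pos: "nondegenerate_box dm K \<Longrightarrow> 0 < vol K"
  unfolding vol_def by (rule prod_pos) (auto simp: nondegenerate_box_def width_def)

interpretation lborel_product: product_sigma_finite "\<lambda>_::nat. lborel :: real measure"
  by (simp add: product_sigma_finite_def sigma_finite_lborel)

lemma sets_set_box: "length K = dm \<Longrightarrow> set_box K \<in> sets (lebesgue_d dm)"
  unfolding lebesgue_d_def set_box_def by (auto intro!: sets_PiM_I_finite simp: set_of_eq)

lemma emeasure_set_box:
  assumes "length K = dm"
  shows "emeasure (lebesgue_d dm) (set_box K) = ennreal (vol K)"
proof -
  have "emeasure (lebesgue_d dm) (set_box K) = (\<Prod>j<dm. emeasure lborel (set_of (K ! j)))"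
    unfolding lebesgue_d_def set_box_def assms
    by (rule lborel_product.emeasure_PiM) (auto simp: set_of_eq)
  also have "\<dots> = ennreal (vol K)"
    unfolding vol_def assms by (simp add: set_of_eq width_def prod_ennreal)
  finally show ?thesis .
qed

lemma measure_set_box: "length K = dm \<Longrightarrow> measure (lebesgue_d dm) (set_box K) = vol K"
  by (simp add: measure_def emeasure_set_box vol_nonneg)

lemma coordinate_hyperplane_null:
  assumes "j < dm"
  shows "{x \<in> space (lebesgue_d dm). x j = c} \<in> null_sets (lebesgue_d dm)"
proof -
  let ?H = "\<Pi>\<^sub>E i\<in>{..<dm}. if i = j then {c} else UNIV"
  have space: "space (lebesgue_d dm) = (\<Pi>\<^sub>E i\<in>{..<dm}. UNIV)"
    by (simp add: lebesgue_d_def space_PiM)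
  have "{x \<in> space (lebesgue_d dm). x j = c} = ?H"
  proof (intro set_eqI iffI)
    fix x assume "x \<in> {x \<in> space (lebesgue_d dm). x j = c}"
    then show "x \<in> ?H" by (auto simp: space PiE_iff)
  next
    fix x assume "x \<in> ?H"
    then show "x \<in> {x \<in> space (lebesgue_d dm). x j = c}"
      using assms by (auto simp: space PiE_iff) (metis lessThan_iff singletonD)
  qed
  moreover have "emeasure (lebesgue_d dm) ?H
      = (\<Prod>i<dm. emeasure lborel (if i = j then {c} else UNIV))"
    unfolding lebesgue_d_def by (subst lborel_product.emeasure_PiM) auto
  moreover have "(\<Prod>i<dm. emeasure lborel (if i = j then {c} else UNIV)) = 0"
    using assms by (intro prod_zero bexI[of _ j]) auto
  moreover have "?H \<in> sets (lebesgue_d dm)"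
    unfolding lebesgue_d_def by (rule sets_PiM_I_finite) auto
  ultimately show ?thesis by (auto intro: null_setsI)
qed

lemma set_integrable_set_box:
  fixes g :: "rvec \<Rightarrow> real"
  assumes K: "length K = dm" and g: "g \<in> borel_measurable (lebesgue_d dm)"
    and bound: "\<And>x. x \<in> set_box K \<Longrightarrow> \<bar>g x\<bar> \<le> B"
  shows "set_integrable (lebesgue_d dm) (set_box K) g"
proof (rule set_integrable_bound)
  show "set_integrable (lebesgue_d dm) (set_box K) (\<lambda>_. B)"
    unfolding set_integrable_def using sets_set_box[OF K] emeasure_set_box[OF K] by simp
  show "set_borel_measurable (lebesgue_d dm) (set_box K) g"
    unfolding set_borel_measurable_def using g sets_set_box[OF K] by measurable
  show "AE x in lebesgue_d dm. x \<in> set_box K \<longrightarrow> norm (g x) \<le> norm B"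
    using bound by (auto intro!: AE_I2 order_trans[OF _ abs_ge_self])
qed

lemma set_integral_set_box_bounds:
  fixes g :: "rvec \<Rightarrow> real"
  assumes K: "length K = dm" and g: "g \<in> borel_measurable (lebesgue_d dm)"
    and bounds: "\<And>x. x \<in> set_box K \<Longrightarrow> lo \<le> g x \<and> g x \<le> hi"
  shows "vol K * lo \<le> (LINT x:set_box K|lebesgue_d dm. g x)
    \<and> (LINT x:set_box K|lebesgue_d dm. g x) \<le> vol K * hi"
proof -
  have const: "(LINT x:set_box K|lebesgue_d dm. c) = vol K * c" for c :: real
    using set_integral_const[OF sets_set_box[OF K], of c] emeasure_set_box[OF K]
      measure_set_box[OF K] by simp
  have int_const: "set_integrable (lebesgue_d dm) (set_box K) (\<lambda>_. c)" for c :: real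
    by (rule set_integrable_set_box[OF K]) auto
  have int_g: "set_integrable (lebesgue_d dm) (set_box K) g"
    by (rule set_integrable_set_box[OF K g, where B = "\<bar>lo\<bar> + \<bar>hi\<bar>"]) (use bounds in force)
  show ?thesis
    using set_integral_mono[OF int_const int_g, of lo] set_integral_mono[OF int_g int_const, of hi]
      bounds unfolding const by auto
qed

section \<open>Interval evaluation of the network\<close>

lemma iaffine_inc:
  assumes "\<And>j. j < d k \<Longrightarrow> set_of (X j) \<subseteq> set_of (Y j)"
  shows "set_of (iaffine W b d k X i) \<subseteq> set_of (iaffine W b d k Y i)"
  unfolding iaffine_def
  by (intro set_of_add_inc set_of_sum_inc set_of_mul_inc) (auto simp: assms)

lemma affine_in_iaffine:
  assumes "\<And>j. j < d k \<Longrightarrow> x j \<in> set_of (X j)"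
  shows "affine W b d k x i \<in> set_of (iaffine W b d k X i)"
  unfolding iaffine_def affine_def
  by (intro plus_in_intervalI sum_in_intervalI times_in_intervalI) (auto simp: assms)

text \<open>The input box enters only through its first \<open>d 0\<close> components, whereas from layer 1 on
  every component is an image under \<open>\<Sigma>\<close>; hence the side condition \<open>j < d k \<or> 0 < k\<close>.\<close>

lemma ival_x_inc:
  assumes encl: "real_enclosure \<sigma> \<Sigma>"
    and KK': "\<And>j. j < d 0 \<Longrightarrow> set_of (K ! j) \<subseteq> set_of (K' ! j)"
  shows "j < d k \<or> 0 < k \<Longrightarrow> set_of (ival_x \<Sigma> W b d k K j) \<subseteq> set_of (ival_x \<Sigma> W b d k K' j)"
proof (induction k arbitrary: j)
  case (Suc k)
  have "set_of (iaffine W b d k (ival_x \<Sigma> W b d k K) j)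
      \<subseteq> set_of (iaffine W b d k (ival_x \<Sigma> W b d k K') j)"
    by (rule iaffine_inc) (use Suc in auto)
  then show ?case using encl unfolding real_enclosure_def by simp
qed (use KK' in simp)

lemma nn_x_in_ival_x:
  assumes encl: "real_enclosure \<sigma> \<Sigma>"
    and xK: "\<And>j. j < d 0 \<Longrightarrow> x j \<in> set_of (K ! j)"
  shows "j < d k \<or> 0 < k \<Longrightarrow> nn_x \<sigma> W b d k x j \<in> set_of (ival_x \<Sigma> W b d k K j)"
proof (induction k arbitrary: j)
  case (Suc k)
  have "affine W b d k (nn_x \<sigma> W b d k x) j \<in> set_of (iaffine W b d k (ival_x \<Sigma> W b d k K) j)"
    by (rule affine_in_iaffine) (use Suc in auto)
  then show ?case using encl unfolding real_enclosure_def by (simp add: image_subset_iff)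
qed (use xK in simp)

lemma Fval_inc:
  assumes "real_enclosure \<sigma> \<Sigma>" "\<And>j. j < d 0 \<Longrightarrow> set_of (K ! j) \<subseteq> set_of (K' ! j)"
  shows "set_of (Fval \<Sigma> W b d (Suc L) K i) \<subseteq> set_of (Fval \<Sigma> W b d (Suc L) K' i)"
  unfolding Fval_def using ival_x_inc[where d = d and W = W and b = b, OF assms]
  by (auto intro!: iaffine_inc)

lemma nn_in_Fval:
  assumes "real_enclosure \<sigma> \<Sigma>" "\<And>j. j < d 0 \<Longrightarrow> x j \<in> set_of (K ! j)"
  shows "nn \<sigma> W b d L x i \<in> set_of (Fval \<Sigma> W b d (Suc L) K i)"
  unfolding Fval_def nn_def using nn_x_in_ival_x[where d = d and W = W and b = b, OF assms]
  by (auto intro!: affine_in_iaffine)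

lemma F_Phi_inc:
  assumes "real_enclosure \<sigma> \<Sigma>" "0 \<le> p" "\<And>j. j < d 0 \<Longrightarrow> set_of (K ! j) \<subseteq> set_of (K' ! j)"
  shows "set_of (F_Phi \<Sigma> W b d L p K) \<subseteq> set_of (F_Phi \<Sigma> W b d L p K')"
  unfolding F_Phi_def using assms
  by (intro set_of_sum_inc set_of_ipowr_inc set_of_abs_interval_inc Fval_inc) auto

lemma f_Phi_in_F_Phi:
  assumes "real_enclosure \<sigma> \<Sigma>" "0 \<le> p" "\<And>j. j < d 0 \<Longrightarrow> x j \<in> set_of (K ! j)"
  shows "f_Phi \<sigma> W b d L p x \<in> set_of (F_Phi \<Sigma> W b d L p K)"
  unfolding F_Phi_def f_Phi_def using assms
  by (intro sum_in_intervalI powr_in_ipowrI) (auto simp: set_of_abs_interval intro: nn_in_Fval)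

lemma box_enclosure_F_Phi:
  assumes encl: "real_enclosure \<sigma> \<Sigma>" and p: "0 \<le> p" and \<Omega>: "length \<Omega> = d 0"
  shows "box_enclosure (d 0) \<Omega> (f_Phi \<sigma> W b d L p) (F_Phi \<Sigma> W b d L p)"
  unfolding box_enclosure_def
proof (intro conjI allI impI)
  fix K K' assume "subbox (d 0) \<Omega> K" "subbox (d 0) \<Omega> K'" "set_box K \<subseteq> set_box K'"
  then show "set_of (F_Phi \<Sigma> W b d L p K) \<subseteq> set_of (F_Phi \<Sigma> W b d L p K')"
    by (intro F_Phi_inc[OF encl p] set_box_subset_nth) (auto simp: subbox_def)
next
  fix K assume "subbox (d 0) \<Omega> K"
  then show "f_Phi \<sigma> W b d L p ` set_box K \<subseteq> set_of (F_Phi \<Sigma> W b d L p K)"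
    by (auto intro!: f_Phi_in_F_Phi[OF encl p] set_box_nth simp: subbox_def)
qed

lemma f_Phi_nonneg: "0 \<le> f_Phi \<sigma> W b d L p x"
  unfolding f_Phi_def by (simp add: sum_nonneg)

lemma continuous_on_nn_x:
  assumes "continuous_on UNIV \<sigma>"
  shows "continuous_on UNIV (\<lambda>x. nn_x \<sigma> W b d k x j)"
proof (induction k arbitrary: j)
  case (Suc k)
  have "continuous_on UNIV (\<lambda>x. affine W b d k (nn_x \<sigma> W b d k x) j)"
    unfolding affine_def by (intro continuous_intros Suc)
  then show ?case using continuous_on_compose2[OF assms] by fastforce
qed simp

lemma continuous_on_f_Phi:
  assumes "continuous_on UNIV \<sigma>" "1 \<le> p"
  shows "continuous_on UNIV (f_Phi \<sigma> W b d L p)"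
  unfolding f_Phi_def nn_def affine_def using assms
  by (intro continuous_on_sum continuous_on_powr' continuous_intros continuous_on_nn_x) auto

lemma nn_x_measurable:
  assumes "continuous_on UNIV \<sigma>"
  shows "j < d k \<or> 0 < k \<Longrightarrow> (\<lambda>x. nn_x \<sigma> W b d k x j) \<in> borel_measurable (lebesgue_d (d 0))"
proof (induction k arbitrary: j)
  case 0
  then show ?case unfolding lebesgue_d_def by simp
next
  case (Suc k)
  have "(\<lambda>x. affine W b d k (nn_x \<sigma> W b d k x) j) \<in> borel_measurable (lebesgue_d (d 0))"
    unfolding affine_def using Suc
    by (intro borel_measurable_add borel_measurable_sum borel_measurable_times) auto
  then show ?case using borel_measurable_continuous_onI[OF assms] by simp
qed

lemma nn_measurable:
  assumes "continuous_on UNIV \<sigma>"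
  shows "(\<lambda>x. nn \<sigma> W b d L x i) \<in> borel_measurable (lebesgue_d (d 0))"
  unfolding nn_def affine_def using nn_x_measurable[OF assms]
  by (intro borel_measurable_add borel_measurable_sum borel_measurable_times) auto

lemma f_Phi_measurable:
  "continuous_on UNIV \<sigma> \<Longrightarrow> f_Phi \<sigma> W b d L p \<in> borel_measurable (lebesgue_d (d 0))"
  unfolding f_Phi_def by (intro borel_measurable_sum measurable_abs_powr nn_measurable)

lemma width_iaffine: "width (iaffine W b d k X i) = (\<Sum>j<d k. \<bar>W k i j\<bar> * width (X j))"
  unfolding iaffine_def
  by (simp add: width_plus width_sum width_interval_of_times width_def[of "interval_of _"])

lemma width_iaffine_le:
  assumes "\<And>j. j < d k \<Longrightarrow> width (X j) \<le> B" "0 \<le> B" "i < d (Suc k)"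
  shows "width (iaffine W b d k X i) \<le> (1 + (\<Sum>i<d (Suc k). \<Sum>j<d k. \<bar>W k i j\<bar>)) * B"
proof -
  have "width (iaffine W b d k X i) \<le> (\<Sum>j<d k. \<bar>W k i j\<bar> * B)"
    unfolding width_iaffine using assms by (intro sum_mono mult_left_mono) auto
  also have "\<dots> = (\<Sum>j<d k. \<bar>W k i j\<bar>) * B" by (simp add: sum_distrib_right)
  also have "\<dots> \<le> (1 + (\<Sum>i<d (Suc k). \<Sum>j<d k. \<bar>W k i j\<bar>)) * B"
    using assms(2,3)
    by (intro mult_right_mono add_increasing member_le_sum) (auto intro: sum_nonneg)
  finally show ?thesis .
qed

lemma ival_x_holder:
  assumes \<Sigma>: "real_holder \<Sigma> C\<^sub>\<Sigma> \<gamma>\<^sub>\<Sigma>" "C\<^sub>\<Sigma> > 0" "0 < \<gamma>\<^sub>\<Sigma>" "\<gamma>\<^sub>\<Sigma> \<le> 1"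
  shows "\<exists>C \<gamma>. C > 0 \<and> 0 < \<gamma> \<and> \<gamma> \<le> 1 \<and> (\<forall>K::box. length K = d 0 \<longrightarrow>
            (\<forall>j<d k. width (ival_x \<Sigma> W b d k K j) \<le> C * box_width K powr \<gamma>))"
proof (induction k)
  case 0
  show ?case
    by (rule exI[of _ 1], rule exI[of _ 1]) (auto simp: box_width_nonneg width_le_box_width)
next
  case (Suc k)
  then obtain C \<gamma> where C: "C > 0" "0 < \<gamma>" "\<gamma> \<le> 1" and IH: "\<And>K j. length K = d 0 \<Longrightarrow> j < d k
      \<Longrightarrow> width (ival_x \<Sigma> W b d k K j) \<le> C * box_width K powr \<gamma>"
    by blast
  define A where "A = 1 + (\<Sum>i<d (Suc k). \<Sum>j<d k. \<bar>W k i j\<bar>)"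
  have A: "A > 0" unfolding A_def by (simp add: add_pos_nonneg sum_nonneg)
  show ?case
  proof (intro exI conjI allI impI)
    show "C\<^sub>\<Sigma> * (A * C) powr \<gamma>\<^sub>\<Sigma> > 0" "0 < \<gamma> * \<gamma>\<^sub>\<Sigma>" "\<gamma> * \<gamma>\<^sub>\<Sigma> \<le> 1"
      using A C \<Sigma> by (auto simp: mult_le_one)
    fix K :: box and i assume K: "length K = d 0" and i: "i < d (Suc k)"
    have w: "width (iaffine W b d k (ival_x \<Sigma> W b d k K) i) \<le> A * (C * box_width K powr \<gamma>)"
      unfolding A_def by (rule width_iaffine_le) (use IH[OF K] C i in auto)
    have "width (ival_x \<Sigma> W b d (Suc k) K i)
        \<le> C\<^sub>\<Sigma> * width (iaffine W b d k (ival_x \<Sigma> W b d k K) i) powr \<gamma>\<^sub>\<Sigma>"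
      using \<Sigma>(1) unfolding real_holder_def by simp
    also have "\<dots> \<le> C\<^sub>\<Sigma> * (A * (C * box_width K powr \<gamma>)) powr \<gamma>\<^sub>\<Sigma>"
      using w \<Sigma> by (intro mult_left_mono powr_mono2) (auto simp: width_nonneg)
    also have "\<dots> = C\<^sub>\<Sigma> * (A * C) powr \<gamma>\<^sub>\<Sigma> * box_width K powr (\<gamma> * \<gamma>\<^sub>\<Sigma>)"
      using A C by (simp add: powr_mult powr_powr box_width_nonneg)
    finally show "width (ival_x \<Sigma> W b d (Suc k) K i)
        \<le> C\<^sub>\<Sigma> * (A * C) powr \<gamma>\<^sub>\<Sigma> * box_width K powr (\<gamma> * \<gamma>\<^sub>\<Sigma>)" .
  qed
qed

text \<open>\<open>p * M powr (p - 1)\<close> is a Lipschitz constant of \<open>t \<mapsto> t powr p\<close> on \<open>[0, M]\<close>;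
  here \<open>M\<close> is taken from the enclosing intervals \<open>Y i\<close>.\<close>

lemma width_sum_ipowr_abs_le:
  assumes inc: "\<And>i. i < n \<Longrightarrow> set_of (X i) \<subseteq> set_of (Y i)"
    and w: "\<And>i. i < n \<Longrightarrow> width (X i) \<le> B" and p: "1 \<le> p"
  shows "width (\<Sum>i<n. ipowr (abs_interval (X i)) p)
    \<le> (\<Sum>i<n. p * upper (abs_interval (Y i)) powr (p - 1)) * B"
proof -
  have "width (ipowr (abs_interval (X i)) p) \<le> p * upper (abs_interval (Y i)) powr (p - 1) * B"
    if i: "i < n" for i
  proof -
    have "upper (abs_interval (X i)) \<le> upper (abs_interval (Y i))"
      using inc[OF i] by (intro set_of_subset_upper_le set_of_abs_interval_inc)
    then have "width (ipowr (abs_interval (X i)) p)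
        \<le> p * upper (abs_interval (Y i)) powr (p - 1) * width (abs_interval (X i))"
      using p by (intro width_ipowr_le) auto
    also have "\<dots> \<le> p * upper (abs_interval (Y i)) powr (p - 1) * B"
      using p width_abs_interval_le[of "X i"] w[OF i] by (intro mult_left_mono) auto
    finally show ?thesis .
  qed
  then show ?thesis
    unfolding width_sum sum_distrib_right by (intro sum_mono) auto
qed

lemma box_holder_F_Phi:
  assumes encl: "real_enclosure \<sigma> \<Sigma>"
    and \<Sigma>: "\<exists>C \<gamma>. C > 0 \<and> 0 < \<gamma> \<and> \<gamma> \<le> 1 \<and> real_holder \<Sigma> C \<gamma>"
    and p: "1 \<le> p" and \<Omega>: "length \<Omega> = d 0"
  shows "\<exists>C \<gamma>. C > 0 \<and> 0 < \<gamma> \<and> \<gamma> \<le> 1 \<and> box_holder (d 0) \<Omega> (F_Phi \<Sigma> W b d L p) C \<gamma>"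
proof -
  obtain C \<gamma> where C: "C > 0" "0 < \<gamma>" "\<gamma> \<le> 1" and ival: "\<And>K j. length K = d 0 \<Longrightarrow> j < d L
      \<Longrightarrow> width (ival_x \<Sigma> W b d L K j) \<le> C * box_width K powr \<gamma>"
    using \<Sigma> ival_x_holder[of \<Sigma> _ _ d L W b] by metis
  define A where "A = 1 + (\<Sum>i<d (Suc L). \<Sum>j<d L. \<bar>W L i j\<bar>)"
  define S where
    "S = 1 + (\<Sum>i<d (Suc L). p * upper (abs_interval (Fval \<Sigma> W b d (Suc L) \<Omega> i)) powr (p - 1))"
  have A: "A > 0" unfolding A_def by (simp add: add_pos_nonneg sum_nonneg)
  have S: "S > 0" unfolding S_def using p by (simp add: add_pos_nonneg sum_nonneg)
  have "box_holder (d 0) \<Omega> (F_Phi \<Sigma> W b d L p) (S * A * C) \<gamma>"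
    unfolding box_holder_def
  proof (intro allI impI)
    fix K assume K: "subbox (d 0) \<Omega> K"
    then have len: "length K = d 0" by (simp add: subbox_def)
    have "width (Fval \<Sigma> W b d (Suc L) K i) \<le> A * (C * box_width K powr \<gamma>)" if "i < d (Suc L)" for i
      unfolding A_def Fval_def using that
      by (simp, intro width_iaffine_le) (use ival[OF len] C in auto)
    moreover have "set_of (Fval \<Sigma> W b d (Suc L) K i) \<subseteq> set_of (Fval \<Sigma> W b d (Suc L) \<Omega> i)" for i
      using K \<Omega> by (intro Fval_inc[OF encl] set_box_subset_nth) (auto simp: subbox_def)
    ultimately have "width (F_Phi \<Sigma> W b d L p K)
        \<le> (\<Sum>i<d (Suc L). p * upper (abs_interval (Fval \<Sigma> W b d (Suc L) \<Omega> i)) powr (p - 1))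
          * (A * (C * box_width K powr \<gamma>))"
      unfolding F_Phi_def using p by (intro width_sum_ipowr_abs_le) auto
    also have "\<dots> \<le> S * (A * (C * box_width K powr \<gamma>))"
      unfolding S_def using A C by (intro mult_right_mono) (auto simp: box_width_nonneg)
    finally show "width (F_Phi \<Sigma> W b d L p K) \<le> S * A * C * box_width K powr \<gamma>"
      by (simp add: mult.assoc)
  qed
  then show ?thesis using S A C by (intro exI[of _ "S * A * C"] exI[of _ \<gamma>]) auto
qed

section \<open>Partitions into boxes\<close>

definition boxes_separated :: "nat \<Rightarrow> box \<Rightarrow> box \<Rightarrow> bool" where
  "boxes_separated dm K K' \<longleftrightarrow>
     (\<exists>j<dm. upper (K ! j) \<le> lower (K' ! j) \<or> upper (K' ! j) \<le> lower (K ! j))"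

definition box_partition :: "nat \<Rightarrow> box \<Rightarrow> box set \<Rightarrow> bool" where
  "box_partition dm \<Omega> P \<longleftrightarrow> finite P \<and> (\<forall>K\<in>P. nondegenerate_box dm K)
     \<and> pairwise (boxes_separated dm) P \<and> (\<Union>K\<in>P. set_box K) = set_box \<Omega>"

lemma boxes_separated_mono:
  assumes sep: "boxes_separated dm K1 K2"
    and len: "length X = dm" "length K1 = dm" "length Y = dm" "length K2 = dm"
    and sub: "set_box X \<subseteq> set_box K1" "set_box Y \<subseteq> set_box K2"
  shows "boxes_separated dm X Y"
proof -
  obtain j where j: "j < dm" "upper (K1 ! j) \<le> lower (K2 ! j) \<or> upper (K2 ! j) \<le> lower (K1 ! j)"
    using sep unfolding boxes_separated_def by blast
  have "set_of (X ! j) \<subseteq> set_of (K1 ! j)" "set_of (Y ! j) \<subseteq> set_of (K2 ! j)"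
    using j(1) len sub by (metis set_box_subset_nth)+
  then have "upper (X ! j) \<le> upper (K1 ! j)" "lower (K1 ! j) \<le> lower (X ! j)"
    "upper (Y ! j) \<le> upper (K2 ! j)" "lower (K2 ! j) \<le> lower (Y ! j)"
    by (auto intro: set_of_subset_upper_le set_of_subset_lower_le)
  then show ?thesis using j unfolding boxes_separated_def by force
qed

lemma box_partition_finite: "box_partition dm \<Omega> P \<Longrightarrow> finite P"
  by (simp add: box_partition_def)

lemma box_partition_nondegenerate: "box_partition dm \<Omega> P \<Longrightarrow> K \<in> P \<Longrightarrow> nondegenerate_box dm K"
  by (simp add: box_partition_def)

lemma box_partition_length: "box_partition dm \<Omega> P \<Longrightarrow> K \<in> P \<Longrightarrow> length K = dm"
  by (simp add: box_partition_def nondegenerate_box_def)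

lemma box_partition_subset: "box_partition dm \<Omega> P \<Longrightarrow> K \<in> P \<Longrightarrow> set_box K \<subseteq> set_box \<Omega>"
  unfolding box_partition_def by blast

lemma box_partition_separated:
  "box_partition dm \<Omega> P \<Longrightarrow> K1 \<in> P \<Longrightarrow> K2 \<in> P \<Longrightarrow> K1 \<noteq> K2 \<Longrightarrow> boxes_separated dm K1 K2"
  unfolding box_partition_def pairwise_def by blast

lemma box_partition_Union: "box_partition dm \<Omega> P \<Longrightarrow> (\<Union>K\<in>P. set_box K) = set_box \<Omega>"
  by (simp add: box_partition_def)

lemma box_partition_singleton: "nondegenerate_box dm K \<Longrightarrow> box_partition dm K {K}"
  by (simp add: box_partition_def)

lemma box_partition_replace:
  assumes P: "box_partition dm \<Omega> P" and MP: "M \<subseteq> P"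
    and R: "\<And>K. K \<in> M \<Longrightarrow> box_partition dm K (R K)"
  shows "box_partition dm \<Omega> ((P - M) \<union> (\<Union>K\<in>M. R K))" (is "box_partition dm \<Omega> ?P'")
proof -
  have parent: "\<exists>K\<in>P. set_box X \<subseteq> set_box K \<and> (X = K \<and> K \<notin> M \<or> K \<in> M \<and> X \<in> R K)"
    if "X \<in> ?P'" for X
    using that MP box_partition_subset[OF R] by blast
  have len: "length X = dm" if "X \<in> ?P'" for X
    using that box_partition_length[OF P] box_partition_length[OF R] by blast
  have "finite ?P'"
    using MP box_partition_finite[OF P] box_partition_finite[OF R] by (auto intro: finite_subset)
  moreover have "\<forall>X\<in>?P'. nondegenerate_box dm X"
    using box_partition_nondegenerate[OF P] box_partition_nondegenerate[OF R] by blast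
  moreover have "boxes_separated dm X Y" if X: "X \<in> ?P'" and Y: "Y \<in> ?P'" and "X \<noteq> Y" for X Y
  proof -
    obtain KX where KX: "KX \<in> P" "set_box X \<subseteq> set_box KX" "X = KX \<and> KX \<notin> M \<or> KX \<in> M \<and> X \<in> R KX"
      using parent[OF X] by blast
    obtain KY where KY: "KY \<in> P" "set_box Y \<subseteq> set_box KY" "Y = KY \<and> KY \<notin> M \<or> KY \<in> M \<and> Y \<in> R KY"
      using parent[OF Y] by blast
    show ?thesis
    proof (cases "KX = KY")
      case True
      then show ?thesis
        using KX KY \<open>X \<noteq> Y\<close> box_partition_separated[OF R] by blast
    next
      case False
      then show ?thesis
        using KX KY len[OF X] len[OF Y] box_partition_length[OF P]
        by (intro boxes_separated_mono[OF box_partition_separated[OF P]]) auto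
    qed
  qed
  moreover have "(\<Union>X\<in>?P'. set_box X) = set_box \<Omega>"
  proof -
    have "(\<Union>X\<in>?P'. set_box X) = (\<Union>K\<in>P - M. set_box K) \<union> (\<Union>K\<in>M. \<Union>X\<in>R K. set_box X)"
      by blast
    also have "\<dots> = (\<Union>K\<in>P. set_box K)"
      using MP box_partition_Union[OF R] by auto
    finally show ?thesis using box_partition_Union[OF P] by simp
  qed
  ultimately show ?thesis unfolding box_partition_def pairwise_def by blast
qed

lemma lower_piece: "lower (piece X m k) = lower X + real k * width X / real m"
  unfolding piece_def using width_nonneg[of X]
  by (intro lower_Ivl add_left_mono divide_right_mono mult_right_mono) auto

lemma upper_piece: "upper (piece X m k) = lower X + real (Suc k) * width X / real m"
  unfolding piece_def by (rule upper_Ivl)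

lemma width_piece: "width (piece X m k) = width X / real m"
  unfolding width_def[of "piece X m k"] lower_piece upper_piece
  by (simp add: diff_divide_distrib[symmetric] algebra_simps)

lemma set_of_piece_subset:
  assumes "k < m"
  shows "set_of (piece X m k) \<subseteq> set_of X"
proof -
  have "real (Suc k) * width X \<le> real m * width X"
    using assms width_nonneg[of X] by (intro mult_right_mono) auto
  then have "real (Suc k) * width X / real m \<le> width X"
    using assms by (simp add: divide_le_eq mult.commute)
  then show ?thesis
    using width_nonneg[of X] by (auto simp: set_of_eq lower_piece upper_piece width_def)
qed

lemma in_piece:
  assumes t: "t \<in> set_of X" and m: "0 < m"
  shows "\<exists>k<m. t \<in> set_of (piece X m k)"
proof (cases "width X = 0")
  case True
  then have "t = lower X" using t by (auto simp: set_of_eq width_def)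
  then show ?thesis
    using m True by (intro exI[of _ 0]) (auto simp: set_of_eq lower_piece upper_piece)
next
  case False
  then have w: "0 < width X" using width_nonneg[of X] by simp
  \<comment> \<open>\<open>t\<close> lies in the piece numbered \<open>\<lfloor>q\<rfloor>\<close>, capped at \<open>m - 1\<close> for \<open>t = upper X\<close>\<close>
  define q where "q = (t - lower X) * real m / width X"
  have q0: "0 \<le> q" using t w by (auto simp: q_def set_of_eq)
  have "q \<le> real m"
    using t w m by (auto simp: q_def set_of_eq width_def divide_le_eq mult_right_mono)
  define k where "k = min (m - 1) (nat \<lfloor>q\<rfloor>)"
  have "k < m" using m by (simp add: k_def)
  moreover have "real k \<le> q" "q \<le> real (Suc k)"
    unfolding k_def using q0 \<open>q \<le> real m\<close> m by (auto simp: min_def) linarith+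
  then have "real k * width X / real m \<le> t - lower X"
    "t - lower X \<le> real (Suc k) * width X / real m"
    using w m by (simp_all add: q_def field_simps)
  ultimately show ?thesis by (auto simp: set_of_eq lower_piece upper_piece)
qed

lemma upper_piece_le_lower_piece: "k1 < k2 \<Longrightarrow> upper (piece X m k1) \<le> lower (piece X m k2)"
  unfolding upper_piece lower_piece using width_nonneg[of X]
  by (intro add_left_mono divide_right_mono mult_right_mono) auto

definition grid :: "box \<Rightarrow> (nat \<Rightarrow> nat) \<Rightarrow> box set" where
  "grid K m = {K'. length K' = length K \<and> (\<forall>i<length K. \<exists>k<m i. K' ! i = piece (K ! i) (m i) k)}"

definition grid_cell :: "box \<Rightarrow> (nat \<Rightarrow> nat) \<Rightarrow> (nat \<Rightarrow> nat) \<Rightarrow> box" where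
  "grid_cell K m ks = map (\<lambda>i. piece (K ! i) (m i) (ks i)) [0..<length K]"

lemma grid_cell_in_grid: "(\<And>i. i < length K \<Longrightarrow> ks i < m i) \<Longrightarrow> grid_cell K m ks \<in> grid K m"
  by (auto simp: grid_def grid_cell_def)

lemma grid_eq_image: "grid K m = grid_cell K m ` (\<Pi>\<^sub>E i\<in>{..<length K}. {..<m i})"
proof (intro set_eqI iffI)
  fix K' assume K': "K' \<in> grid K m"
  then have "\<forall>i\<in>{..<length K}. \<exists>k. k < m i \<and> K' ! i = piece (K ! i) (m i) k"
    by (auto simp: grid_def)
  then obtain ks where ks: "\<forall>i\<in>{..<length K}. ks i < m i \<and> K' ! i = piece (K ! i) (m i) (ks i)"
    by (rule bchoice[THEN exE])
  have "K' = grid_cell K m (restrict ks {..<length K})"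
  proof (rule nth_equalityI)
    show "length K' = length (grid_cell K m (restrict ks {..<length K}))"
      using K' by (simp add: grid_def grid_cell_def)
    fix i assume "i < length K'"
    then show "K' ! i = grid_cell K m (restrict ks {..<length K}) ! i"
      using K' ks by (simp add: grid_def grid_cell_def)
  qed
  moreover have "restrict ks {..<length K} \<in> (\<Pi>\<^sub>E i\<in>{..<length K}. {..<m i})" using ks by simp
  ultimately show "K' \<in> grid_cell K m ` (\<Pi>\<^sub>E i\<in>{..<length K}. {..<m i})" by blast
next
  fix K' assume "K' \<in> grid_cell K m ` (\<Pi>\<^sub>E i\<in>{..<length K}. {..<m i})"
  then obtain ks where "ks \<in> (\<Pi>\<^sub>E i\<in>{..<length K}. {..<m i})" "K' = grid_cell K m ks" by blast
  then show "K' \<in> grid K m" by (simp add: grid_cell_in_grid PiE_iff)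
qed

lemma grid_nth:
  assumes "K' \<in> grid K m" "j < length K"
  obtains k where "k < m j" "K' ! j = piece (K ! j) (m j) k"
  using assms unfolding grid_def by blast

lemma width_grid_nth:
  assumes "K' \<in> grid K m" "j < length K"
  shows "width (K' ! j) = width (K ! j) / real (m j)"
  by (rule grid_nth[OF assms]) (simp add: width_piece)

lemma sum_vol_grid_le:
  assumes m: "\<And>i. i < length K \<Longrightarrow> 0 < m i"
  shows "(\<Sum>K'\<in>grid K m. vol K') \<le> vol K"
proof -
  let ?A = "\<Pi>\<^sub>E i\<in>{..<length K}. {..<m i}"
  have "(\<Sum>K'\<in>grid K m. vol K') \<le> (\<Sum>ks\<in>?A. vol (grid_cell K m ks))"
    unfolding grid_eq_image using sum_image_le[of ?A vol "grid_cell K m"]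
    by (auto intro: finite_PiE vol_nonneg)
  also have "\<dots> = (\<Sum>ks\<in>?A. \<Prod>i<length K. width (K ! i) / real (m i))"
    by (intro sum.cong refl) (simp add: vol_def grid_cell_def width_piece)
  also have "\<dots> = (\<Prod>i<length K. \<Sum>k<m i. width (K ! i) / real (m i))"
    by (rule prod_sum_PiE[symmetric]) auto
  also have "\<dots> = vol K"
    unfolding vol_def using m by (intro prod.cong refl) simp
  finally show ?thesis .
qed

lemma finite_grid: "finite (grid K m)"
  unfolding grid_eq_image by (intro finite_imageI finite_PiE) auto

lemma nondegenerate_grid:
  assumes K: "nondegenerate_box dm K" and m: "\<And>i. i < dm \<Longrightarrow> 0 < m i" and K': "K' \<in> grid K m"
  shows "nondegenerate_box dm K'"
proof -
  have len: "length K = dm" using K by (simp add: nondegenerate_box_def)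
  have "lower (K' ! j) < upper (K' ! j)" if j: "j < dm" for j
  proof (rule grid_nth[OF K'])
    show "j < length K" using j len by simp
    fix k assume "K' ! j = piece (K ! j) (m j) k"
    then show "lower (K' ! j) < upper (K' ! j)"
      using nondegenerate_box_width_pos[OF K j] m[OF j]
      by (simp add: lower_piece upper_piece field_simps)
  qed
  then show ?thesis using K' len by (simp add: nondegenerate_box_def grid_def)
qed

lemma grid_separated:
  assumes K1: "K1 \<in> grid K m" and K2: "K2 \<in> grid K m" and "K1 \<noteq> K2"
  shows "boxes_separated (length K) K1 K2"
proof -
  have len: "length K1 = length K" "length K2 = length K" using K1 K2 by (simp_all add: grid_def)
  have "\<exists>j<length K. K1 ! j \<noteq> K2 ! j"
  proof (rule ccontr)
    assume "\<not> ?thesis"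
    then have "K1 = K2" using len by (intro nth_equalityI) auto
    then show False using \<open>K1 \<noteq> K2\<close> by simp
  qed
  then obtain j where j: "j < length K" "K1 ! j \<noteq> K2 ! j" by blast
  obtain k1 where k1: "K1 ! j = piece (K ! j) (m j) k1" by (rule grid_nth[OF K1 j(1)])
  obtain k2 where k2: "K2 ! j = piece (K ! j) (m j) k2" by (rule grid_nth[OF K2 j(1)])
  have "k1 \<noteq> k2" using j(2) k1 k2 by auto
  then have "k1 < k2 \<or> k2 < k1" by linarith
  then have "upper (K1 ! j) \<le> lower (K2 ! j) \<or> upper (K2 ! j) \<le> lower (K1 ! j)"
    unfolding k1 k2 using upper_piece_le_lower_piece by blast
  then show ?thesis using j(1) unfolding boxes_separated_def by blast
qed

lemma set_box_grid_subset:
  assumes K': "K' \<in> grid K m"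
  shows "set_box K' \<subseteq> set_box K"
proof (rule set_box_mono)
  show "length K' = length K" using K' by (simp add: grid_def)
  fix j assume "j < length K'"
  then have j: "j < length K" using K' by (simp add: grid_def)
  obtain k where "k < m j" "K' ! j = piece (K ! j) (m j) k" by (rule grid_nth[OF K' j])
  then show "set_of (K' ! j) \<subseteq> set_of (K ! j)" by (simp add: set_of_piece_subset)
qed

lemma Union_set_box_grid:
  assumes m: "\<And>i. i < length K \<Longrightarrow> 0 < m i"
  shows "(\<Union>K'\<in>grid K m. set_box K') = set_box K"
proof
  show "(\<Union>K'\<in>grid K m. set_box K') \<subseteq> set_box K" using set_box_grid_subset by blast
next
  show "set_box K \<subseteq> (\<Union>K'\<in>grid K m. set_box K')"
  proof
    fix x assume x: "x \<in> set_box K"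
    have "\<exists>k<m i. x i \<in> set_of (piece (K ! i) (m i) k)" if "i < length K" for i
      using that by (intro in_piece set_box_nth[OF x] m)
    then have "\<forall>i\<in>{..<length K}. \<exists>k. k < m i \<and> x i \<in> set_of (piece (K ! i) (m i) k)"
      by blast
    then obtain ks
      where ks: "\<forall>i\<in>{..<length K}. ks i < m i \<and> x i \<in> set_of (piece (K ! i) (m i) (ks i))"
      by (rule bchoice[THEN exE])
    then have "x \<in> set_box (grid_cell K m ks)"
      using x by (auto simp: set_box_def grid_cell_def PiE_iff)
    moreover have "grid_cell K m ks \<in> grid K m" using ks by (simp add: grid_cell_in_grid)
    ultimately show "x \<in> (\<Union>K'\<in>grid K m. set_box K')" by blast
  qed
qed

lemma box_partition_grid:
  assumes K: "nondegenerate_box dm K" and m: "\<And>i. i < dm \<Longrightarrow> 0 < m i"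
  shows "box_partition dm K (grid K m)"
proof -
  have len: "length K = dm" using K by (simp add: nondegenerate_box_def)
  have "\<forall>K'\<in>grid K m. nondegenerate_box dm K'" using nondegenerate_grid[OF K] m by blast
  moreover have "pairwise (boxes_separated dm) (grid K m)"
    using grid_separated[of _ K m] len unfolding pairwise_def by blast
  moreover have "(\<Union>K'\<in>grid K m. set_box K') = set_box K"
    using Union_set_box_grid[of K m] m len by simp
  ultimately show ?thesis using finite_grid unfolding box_partition_def by blast
qed

section \<open>Refinement, marking and estimator reduction\<close>

lemma eta_nonneg: "0 \<le> eta F K"
  unfolding eta_def by (simp add: width_nonneg vol_nonneg)

lemma holder_refine_eq_grid:
  "e \<noteq> 0 \<Longrightarrow> holder_refine C \<gamma> \<rho> e K
     = grid K (\<lambda>i. nat \<lceil>width (K ! i) * (C * vol K / (\<rho> * e)) powr (1 / \<gamma>)\<rceil>)"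
  unfolding holder_refine_def grid_def by (simp add: Let_def)

lemma box_partition_holder_refine:
  assumes K: "nondegenerate_box dm K" and C: "C > 0" and \<rho>: "\<rho> > 0" and e: "0 \<le> e"
  shows "box_partition dm K (holder_refine C \<gamma> \<rho> e K)"
proof (cases "e = 0")
  case True
  then show ?thesis using K by (simp add: holder_refine_def box_partition_singleton)
next
  case False
  have "0 < (C * vol K / (\<rho> * e)) powr (1 / \<gamma>)"
    using nondegenerate_box_vol_pos[OF K] C \<rho> e False by simp
  then have "0 < nat \<lceil>width (K ! i) * (C * vol K / (\<rho> * e)) powr (1 / \<gamma>)\<rceil>" if "i < dm" for i
    using nondegenerate_box_width_pos[OF K that] by simp
  then show ?thesis unfolding holder_refine_eq_grid[OF False] by (rule box_partition_grid[OF K])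
qed

lemma box_width_grid_le:
  assumes K': "K' \<in> grid K m" and s: "0 < s" and m: "\<And>i. i < length K \<Longrightarrow> width (K ! i) * s \<le> m i"
  shows "box_width K' \<le> 1 / s"
proof -
  have "width (K' ! i) \<le> 1 / s" if i: "i < length K" for i
  proof (cases "width (K ! i) = 0")
    case True
    then show ?thesis using width_grid_nth[OF K' i] s by simp
  next
    case False
    then have w: "0 < width (K ! i)" using width_nonneg[of "K ! i"] by simp
    have "0 < width (K ! i) * s" using w s by simp
    then have "0 < real (m i)" using m[OF i] by linarith
    then have "width (K ! i) / real (m i) \<le> width (K ! i) / (width (K ! i) * s)"
      using w s m[OF i] by (intro divide_left_mono) auto
    then show ?thesis using width_grid_nth[OF K' i] w by simp
  qed
  moreover have "length K' = length K" using K' by (simp add: grid_def)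
  ultimately show ?thesis
    unfolding box_width_def using s by (intro Max.boundedI) (auto simp: in_set_conv_nth)
qed

text \<open>The number of pieces is chosen such that every child \<open>K'\<close> of \<open>K\<close> has
  \<open>C * box_width K' powr \<gamma> \<le> \<rho> * eta F K / vol K\<close>; summing over the children gives
  the factor \<open>\<rho>\<close>.\<close>

lemma sum_eta_holder_refine_le:
  assumes K: "nondegenerate_box dm K" "set_box K \<subseteq> set_box \<Omega>"
    and F: "box_holder dm \<Omega> F C \<gamma>" and C: "C > 0" and \<gamma>: "\<gamma> > 0" and \<rho>: "\<rho> > 0"
  shows "sum (eta F) (holder_refine C \<gamma> \<rho> (eta F K) K) \<le> \<rho> * eta F K"
proof (cases "eta F K = 0")
  case True
  then show ?thesis by (simp add: holder_refine_def)
next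
  case False
  define e where "e = eta F K"
  define v where "v = vol K"
  define s where "s = (C * v / (\<rho> * e)) powr (1 / \<gamma>)"
  define m where "m i = nat \<lceil>width (K ! i) * s\<rceil>" for i
  have e: "0 < e" using False eta_nonneg[of F K] by (simp add: e_def)
  have v: "0 < v" using nondegenerate_box_vol_pos[OF K(1)] by (simp add: v_def)
  have s: "0 < s" using C v \<rho> e by (simp add: s_def)
  have len: "length K = dm" using K(1) by (simp add: nondegenerate_box_def)
  have R: "holder_refine C \<gamma> \<rho> e K = grid K m"
    unfolding m_def s_def v_def using False by (simp add: e_def holder_refine_eq_grid)
  have "C * (1 / s) powr \<gamma> = \<rho> * e / v"
    using C v \<rho> e \<gamma> by (simp add: s_def powr_divide powr_powr)
  then have eta_child: "eta F K' \<le> \<rho> * e / v * vol K'" if K': "K' \<in> grid K m" for K'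
  proof -
    have "subbox dm \<Omega> K'"
      using set_box_grid_subset[OF K'] K' K(2) len by (auto simp: subbox_def grid_def)
    then have "width (F K') \<le> C * box_width K' powr \<gamma>" using F by (simp add: box_holder_def)
    also have "\<dots> \<le> C * (1 / s) powr \<gamma>"
      using box_width_grid_le[OF K' s] C \<gamma> box_width_nonneg
      by (intro mult_left_mono powr_mono2) (auto simp: m_def real_nat_ceiling_ge)
    finally have "width (F K') \<le> \<rho> * e / v"
      using \<open>C * (1 / s) powr \<gamma> = \<rho> * e / v\<close> by simp
    then show ?thesis unfolding eta_def by (intro mult_right_mono vol_nonneg)
  qed
  have "sum (eta F) (grid K m) \<le> \<rho> * e / v * (\<Sum>K'\<in>grid K m. vol K')"
    unfolding sum_distrib_left by (intro sum_mono eta_child)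
  also have "\<dots> \<le> \<rho> * e / v * v"
    using sum_vol_grid_le[of K m] s nondegenerate_box_width_pos[OF K(1)] len \<rho> e v
    by (intro mult_left_mono) (auto simp: v_def m_def)
  finally show ?thesis using v R by (simp add: e_def)
qed

lemma dorfler_iterate_subset: "(dorfler_step \<eta> P ^^ k) {} \<subseteq> P"
  by (induction k) (auto simp: dorfler_step_def)

lemma dorfler_subset: "dorfler \<theta> \<eta> P \<subseteq> P"
  unfolding dorfler_def by (rule dorfler_iterate_subset)

text \<open>Each step marks at least one new element.\<close>

lemma dorfler_iterate_card:
  assumes P: "finite P"
  shows "(dorfler_step \<eta> P ^^ card P) {} = P"
proof -
  let ?M = "\<lambda>k. (dorfler_step \<eta> P ^^ k) {}"
  have "min k (card P) \<le> card (?M k)" for k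
  proof (induction k)
    case (Suc k)
    show ?case
    proof (cases "?M k = P")
      case True
      then have "?M (Suc k) = P" by (auto simp: dorfler_step_def)
      then show ?thesis by simp
    next
      case False
      then have "P - ?M k \<noteq> {}"
        using dorfler_iterate_subset[where \<eta> = \<eta> and P = P and k = k] by blast
      then have "Max (\<eta> ` (P - ?M k)) \<in> \<eta> ` (P - ?M k)" using P by (intro Max_in) auto
      then obtain K where K: "K \<in> P - ?M k" "\<eta> K = Max (\<eta> ` (P - ?M k))" by auto
      then have "?M k \<subset> ?M (Suc k)" by (auto simp: dorfler_step_def)
      moreover have "finite (?M (Suc k))" by (rule finite_subset[OF dorfler_iterate_subset P])
      ultimately have "card (?M k) < card (?M (Suc k))" by (simp add: psubset_card_mono)
      then show ?thesis using Suc by linarith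
    qed
  qed simp
  from this[of "card P"] show ?thesis
    using P dorfler_iterate_subset[where \<eta> = \<eta> and P = P and k = "card P"]
    by (intro card_subset_eq) (auto intro: antisym card_mono)
qed

lemma dorfler_bulk:
  assumes P: "finite P" and \<eta>: "\<And>K. K \<in> P \<Longrightarrow> 0 \<le> \<eta> K" and \<theta>: "\<theta> \<le> 1"
  shows "\<theta> * sum \<eta> P \<le> sum \<eta> (dorfler \<theta> \<eta> P)"
proof -
  have "0 \<le> sum \<eta> P" using \<eta> by (simp add: sum_nonneg)
  then have "\<theta> * sum \<eta> P \<le> sum \<eta> ((dorfler_step \<eta> P ^^ card P) {})"
    unfolding dorfler_iterate_card[OF P] using mult_right_mono[OF \<theta>] by simp
  then show ?thesis unfolding dorfler_def by (rule LeastI)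
qed

lemma box_partition_adaquad_P:
  assumes C: "C > 0" and \<rho>: "\<rho> > 0" and \<Omega>: "nondegenerate_box dm \<Omega>"
  shows "box_partition dm \<Omega> (adaquad_P F \<theta> \<rho> C \<gamma> \<Omega> n)"
proof (induction n)
  case 0
  show ?case using \<Omega> by (simp add: box_partition_singleton)
next
  case (Suc n)
  then show ?case
    unfolding adaquad_P.simps Let_def
    by (intro box_partition_replace dorfler_subset box_partition_holder_refine[OF _ C \<rho> eta_nonneg])
      (auto intro: box_partition_nondegenerate dest: dorfler_subset[THEN subsetD])
qed

lemma sum_UN_le:
  fixes f :: "'a \<Rightarrow> real"
  assumes "finite I" "\<And>i. i \<in> I \<Longrightarrow> finite (A i)" "\<And>x. 0 \<le> f x"
  shows "sum f (\<Union>i\<in>I. A i) \<le> (\<Sum>i\<in>I. sum f (A i))"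
proof -
  have "(\<Union>i\<in>I. A i) = snd ` Sigma I A" by force
  moreover have "sum f (snd ` Sigma I A) \<le> sum (f \<circ> snd) (Sigma I A)"
    using assms by (intro sum_image_le) auto
  ultimately have "sum f (\<Union>i\<in>I. A i) \<le> sum (f \<circ> snd) (Sigma I A)" by simp
  also have "\<dots> = (\<Sum>i\<in>I. sum f (A i))"
    using assms by (simp add: sum.Sigma split_def)
  finally show ?thesis .
qed

lemma adaquad_eta_Suc_le:
  assumes F: "box_holder dm \<Omega> F C \<gamma>" and C: "C > 0" and \<gamma>: "\<gamma> > 0"
    and \<rho>: "0 < \<rho>" "\<rho> \<le> 1" and \<theta>: "\<theta> \<le> 1" and \<Omega>: "nondegenerate_box dm \<Omega>"
  shows "adaquad_eta F \<theta> \<rho> C \<gamma> \<Omega> (Suc n) \<le> (1 - \<theta> * (1 - \<rho>)) * adaquad_eta F \<theta> \<rho> C \<gamma> \<Omega> n"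
proof -
  let ?P = "adaquad_P F \<theta> \<rho> C \<gamma> \<Omega> n"
  let ?M = "dorfler \<theta> (eta F) ?P"
  let ?R = "\<lambda>K. holder_refine C \<gamma> \<rho> (eta F K) K"
  have P: "box_partition dm \<Omega> ?P" using box_partition_adaquad_P[OF C \<rho>(1) \<Omega>] .
  have MP: "?M \<subseteq> ?P" by (rule dorfler_subset)
  have finP: "finite ?P" using box_partition_finite[OF P] .
  have finM: "finite ?M" using finP MP by (rule finite_subset[rotated])
  have finR: "finite (?R K)" if "K \<in> ?M" for K
  proof -
    have "nondegenerate_box dm K" using that MP box_partition_nondegenerate[OF P] by blast
    then show ?thesis
      by (rule box_partition_finite[OF box_partition_holder_refine[OF _ C \<rho>(1) eta_nonneg]])
  qed
  have "adaquad_eta F \<theta> \<rho> C \<gamma> \<Omega> (Suc n) = sum (eta F) ((?P - ?M) \<union> (\<Union>K\<in>?M. ?R K))"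
    unfolding adaquad_eta_def by (simp add: Let_def)
  also have "\<dots> \<le> sum (eta F) (?P - ?M) + sum (eta F) (\<Union>K\<in>?M. ?R K)"
    using finP finM finR by (simp add: sum_Un sum_nonneg eta_nonneg)
  also have "sum (eta F) (\<Union>K\<in>?M. ?R K) \<le> (\<Sum>K\<in>?M. sum (eta F) (?R K))"
    using finM finR by (intro sum_UN_le eta_nonneg)
  also have "\<dots> \<le> (\<Sum>K\<in>?M. \<rho> * eta F K)"
    using MP box_partition_nondegenerate[OF P] box_partition_subset[OF P]
    by (intro sum_mono sum_eta_holder_refine_le[OF _ _ F C \<gamma> \<rho>(1)]) auto
  also have "\<dots> = \<rho> * sum (eta F) ?M" by (simp add: sum_distrib_left)
  also have "sum (eta F) (?P - ?M) = sum (eta F) ?P - sum (eta F) ?M"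
    using finP MP by (simp add: sum_diff)
  finally have "adaquad_eta F \<theta> \<rho> C \<gamma> \<Omega> (Suc n) \<le> sum (eta F) ?P - (1 - \<rho>) * sum (eta F) ?M"
    by (simp add: algebra_simps)
  also have "\<dots> \<le> sum (eta F) ?P - (1 - \<rho>) * (\<theta> * sum (eta F) ?P)"
    using dorfler_bulk[OF finP eta_nonneg \<theta>] \<rho> by (simp add: mult_left_mono)
  finally show ?thesis unfolding adaquad_eta_def by (simp add: algebra_simps)
qed

section \<open>Quadrature error and the \<open>L\<^sup>p\<close> norm\<close>

lemma quad_bounds:
  assumes rule: "valid_quad_rule dm rule" and K: "length K = dm"
    and bounds: "\<And>x. x \<in> set_box K \<Longrightarrow> lo \<le> g x \<and> g x \<le> hi"
  shows "vol K * lo \<le> quad rule g K \<and> quad rule g K \<le> vol K * hi"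
proof -
  have nodes: "w * lo \<le> w * g x \<and> w * g x \<le> w * hi" if "(w, x) \<in> set (rule K)" for w x
  proof -
    have "0 < w" "x \<in> set_box K" using rule K that unfolding valid_quad_rule_def by fastforce+
    then show ?thesis using bounds[OF \<open>x \<in> set_box K\<close>] by (auto intro: mult_left_mono)
  qed
  have "(\<Sum>(w, x)\<leftarrow>rule K. w) = vol K" using rule K unfolding valid_quad_rule_def by blast
  then have const: "(\<Sum>(w, x)\<leftarrow>rule K. w * c) = vol K * c" for c
    by (simp add: split_def sum_list_mult_const)
  have "(\<Sum>(w, x)\<leftarrow>rule K. w * lo) \<le> quad rule g K" "quad rule g K \<le> (\<Sum>(w, x)\<leftarrow>rule K. w * hi)"
    unfolding quad_def by (auto intro!: sum_list_mono dest: nodes)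
  then show ?thesis unfolding const by simp
qed

lemma quad_nonneg:
  assumes "valid_quad_rule dm rule" "length K = dm" "\<And>x. 0 \<le> g x"
  shows "0 \<le> quad rule g K"
  using assms unfolding quad_def valid_quad_rule_def
  by (fastforce intro!: sum_list_nonneg)

text \<open>Both the integral and the quadrature of \<open>g\<close> over \<open>K\<close> lie in \<open>vol K * F K\<close>.\<close>

lemma quad_error_le:
  assumes rule: "valid_quad_rule dm rule" and K: "length K = dm"
    and g: "g \<in> borel_measurable (lebesgue_d dm)" and encl: "g ` set_box K \<subseteq> set_of (F K)"
  shows "\<bar>(LINT x:set_box K|lebesgue_d dm. g x) - quad rule g K\<bar> \<le> eta F K"
proof -
  have bounds: "lower (F K) \<le> g x \<and> g x \<le> upper (F K)" if "x \<in> set_box K" for x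
    using encl that by (auto simp: set_of_eq)
  have "vol K * lower (F K) \<le> (LINT x:set_box K|lebesgue_d dm. g x)
      \<and> (LINT x:set_box K|lebesgue_d dm. g x) \<le> vol K * upper (F K)"
    by (rule set_integral_set_box_bounds[OF K g]) (rule bounds)
  moreover have "vol K * lower (F K) \<le> quad rule g K \<and> quad rule g K \<le> vol K * upper (F K)"
    by (rule quad_bounds[OF rule K]) (rule bounds)
  ultimately have "\<bar>(LINT x:set_box K|lebesgue_d dm. g x) - quad rule g K\<bar>
      \<le> vol K * upper (F K) - vol K * lower (F K)"
    by linarith
  then show ?thesis unfolding eta_def width_def by (simp add: algebra_simps)
qed

lemma set_box_Int_subset_hyperplane:
  assumes "boxes_separated dm K1 K2" "length K1 = dm" "length K2 = dm"
  obtains j c where "j < dm" "set_box K1 \<inter> set_box K2 \<subseteq> {x. x j = c}"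
proof -
  obtain j where j: "j < dm" "upper (K1 ! j) \<le> lower (K2 ! j) \<or> upper (K2 ! j) \<le> lower (K1 ! j)"
    using assms(1) unfolding boxes_separated_def by blast
  let ?c = "if upper (K1 ! j) \<le> lower (K2 ! j) then upper (K1 ! j) else upper (K2 ! j)"
  have "set_box K1 \<inter> set_box K2 \<subseteq> {x. x j = ?c}"
  proof
    fix x assume "x \<in> set_box K1 \<inter> set_box K2"
    then have "x j \<in> set_of (K1 ! j)" "x j \<in> set_of (K2 ! j)"
      using j(1) assms(2,3) by (auto intro: set_box_nth)
    then show "x \<in> {x. x j = ?c}" using j(2) by (auto simp: set_of_eq)
  qed
  then show ?thesis using that j(1) by blast
qed

lemma set_integral_box_partition:
  fixes g :: "rvec \<Rightarrow> real"
  assumes P: "box_partition dm \<Omega> P"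
    and int: "\<And>K. K \<in> P \<Longrightarrow> set_integrable (lebesgue_d dm) (set_box K) g"
  shows "(LINT x:set_box \<Omega>|lebesgue_d dm. g x) = (\<Sum>K\<in>P. LINT x:set_box K|lebesgue_d dm. g x)"
proof -
  have "AE x in lebesgue_d dm. x \<in> set_box K1 \<and> x \<in> set_box K2 \<longrightarrow> K1 = K2"
    if K1: "K1 \<in> P" and K2: "K2 \<in> P" for K1 K2
  proof (cases "K1 = K2")
    case False
    then obtain j c where j: "j < dm" and Int: "set_box K1 \<inter> set_box K2 \<subseteq> {x. x j = c}"
      using box_partition_separated[OF P K1 K2] box_partition_length[OF P] K1 K2
      by (metis set_box_Int_subset_hyperplane)
    show ?thesis by (rule AE_I'[OF coordinate_hyperplane_null[OF j, of c]]) (use Int in auto)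
  qed simp
  then show ?thesis
    unfolding box_partition_Union[OF P, symmetric]
    using box_partition_finite[OF P] box_partition_length[OF P] int
    by (intro set_integral_finite_UN_AE) (auto intro: sets_set_box)
qed

lemma quad_partition_error_le:
  assumes encl: "box_enclosure dm \<Omega> f F" and f: "f \<in> borel_measurable (lebesgue_d dm)"
    and rule: "valid_quad_rule dm rule" and P: "box_partition dm \<Omega> P"
  shows "\<bar>(LINT x:set_box \<Omega>|lebesgue_d dm. f x) - (\<Sum>K\<in>P. quad rule f K)\<bar> \<le> (\<Sum>K\<in>P. eta F K)"
proof -
  have K: "length K = dm" "f ` set_box K \<subseteq> set_of (F K)" if "K \<in> P" for K
    using that encl box_partition_length[OF P] box_partition_subset[OF P]
    by (auto simp: box_enclosure_def subbox_def)
  have "set_integrable (lebesgue_d dm) (set_box K) f" if "K \<in> P" for K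
  proof (rule set_integrable_set_box[OF K(1)[OF that] f])
    fix x assume "x \<in> set_box K"
    then have "lower (F K) \<le> f x \<and> f x \<le> upper (F K)" using K(2)[OF that] by (auto simp: set_of_eq)
    then show "\<bar>f x\<bar> \<le> \<bar>lower (F K)\<bar> + \<bar>upper (F K)\<bar>" by linarith
  qed
  then have "\<bar>(LINT x:set_box \<Omega>|lebesgue_d dm. f x) - (\<Sum>K\<in>P. quad rule f K)\<bar>
      = \<bar>\<Sum>K\<in>P. (LINT x:set_box K|lebesgue_d dm. f x) - quad rule f K\<bar>"
    by (simp add: set_integral_box_partition[OF P] sum_subtractf)
  also have "\<dots> \<le> (\<Sum>K\<in>P. \<bar>(LINT x:set_box K|lebesgue_d dm. f x) - quad rule f K\<bar>)"
    by (rule sum_abs)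
  also have "\<dots> \<le> (\<Sum>K\<in>P. eta F K)"
    using K by (intro sum_mono quad_error_le[OF rule _ f]) auto
  finally show ?thesis .
qed

lemma adaquad_Q_error:
  assumes "box_enclosure dm \<Omega> f F" "f \<in> borel_measurable (lebesgue_d dm)" "valid_quad_rule dm rule"
    and "C > 0" "\<rho> > 0" "nondegenerate_box dm \<Omega>"
  shows "\<bar>(LINT x:set_box \<Omega>|lebesgue_d dm. f x) - adaquad_Q f F rule \<theta> \<rho> C \<gamma> \<Omega> n\<bar>
    \<le> adaquad_eta F \<theta> \<rho> C \<gamma> \<Omega> n"
  unfolding adaquad_Q_def adaquad_eta_def using assms
  by (intro quad_partition_error_le box_partition_adaquad_P)

lemma adaquad_Q_nonneg:
  assumes "valid_quad_rule dm rule" "\<And>x. 0 \<le> f x" "C > 0" "\<rho> > 0" "nondegenerate_box dm \<Omega>"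
  shows "0 \<le> adaquad_Q f F rule \<theta> \<rho> C \<gamma> \<Omega> n"
  unfolding adaquad_Q_def using assms box_partition_adaquad_P[OF assms(3-5)]
  by (intro sum_nonneg quad_nonneg box_partition_length) auto

lemma Lp_norm_nn_eq:
  assumes cont: "continuous_on UNIV \<sigma>" and encl: "real_enclosure \<sigma> \<Sigma>" and p: "0 \<le> p"
    and \<Omega>: "length \<Omega> = d 0"
  shows "Lp_norm_nn \<sigma> W b d L p \<Omega>
    = (LINT x:set_box \<Omega>|lebesgue_d (d 0). f_Phi \<sigma> W b d L p x) powr (1 / p)"
proof -
  let ?g = "\<lambda>i x. \<bar>nn \<sigma> W b d L x i\<bar> powr p"
  have "set_integrable (lebesgue_d (d 0)) (set_box \<Omega>) (?g i)" if i: "i < d (Suc L)" for i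
  proof (rule set_integrable_set_box[OF \<Omega>])
    show "?g i \<in> borel_measurable (lebesgue_d (d 0))"
      by (intro measurable_abs_powr nn_measurable[OF cont])
    fix x assume x: "x \<in> set_box \<Omega>"
    have "?g i x \<le> f_Phi \<sigma> W b d L p x" unfolding f_Phi_def using i by (intro member_le_sum) auto
    also have "\<dots> \<le> upper (F_Phi \<Sigma> W b d L p \<Omega>)"
    proof -
      have "f_Phi \<sigma> W b d L p x \<in> set_of (F_Phi \<Sigma> W b d L p \<Omega>)"
        using set_box_nth[OF x] \<Omega> by (intro f_Phi_in_F_Phi[OF encl p]) auto
      then show ?thesis by (simp add: set_of_eq)
    qed
    finally show "\<bar>?g i x\<bar> \<le> upper (F_Phi \<Sigma> W b d L p \<Omega>)" by simp
  qed
  then have "(\<Sum>i<d (Suc L). LINT x:set_box \<Omega>|lebesgue_d (d 0). ?g i x)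
      = (LINT x:set_box \<Omega>|lebesgue_d (d 0). (\<Sum>i<d (Suc L). ?g i x))"
    unfolding set_lebesgue_integral_def scaleR_sum_right
    by (subst Bochner_Integration.integral_sum) (auto simp: set_integrable_def)
  then show ?thesis unfolding Lp_norm_nn_def f_Phi_def by simp
qed

lemma powr_add_le:
  fixes x y r :: real
  assumes "0 \<le> x" "0 \<le> y" "0 < r" "r \<le> 1"
  shows "(x + y) powr r \<le> x powr r + y powr r"
proof (cases "x + y = 0")
  case False
  then have s: "0 < x + y" using assms by simp
  have k: "t \<le> t powr r" if "0 \<le> t" "t \<le> 1" for t :: real
    using powr_mono'[of r 1 t] that assms by simp
  have "(x + y) powr r = (x + y) powr r * (x / (x + y) + y / (x + y))"
    using s by (simp add: add_divide_distrib[symmetric])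
  also have "\<dots> \<le> (x + y) powr r * ((x / (x + y)) powr r + (y / (x + y)) powr r)"
    using k[of "x / (x + y)"] k[of "y / (x + y)"] s assms by (intro mult_left_mono add_mono) auto
  also have "\<dots> = x powr r + y powr r"
    using s assms by (simp add: distrib_left powr_divide)
  finally show ?thesis .
qed (use assms in simp)

lemma abs_powr_diff_le:
  fixes a b e r :: real
  assumes a: "0 \<le> a" and b: "0 \<le> b" and e: "\<bar>a - b\<bar> \<le> e" and r: "0 < r" "r \<le> 1"
  shows "\<bar>a powr r - b powr r\<bar> \<le> e powr r"
proof -
  have main: "x powr r - y powr r \<le> (x - y) powr r" if "0 \<le> y" "y \<le> x" for x y :: real
    using powr_add_le[of y "x - y" r] that r by simp
  have "\<bar>a powr r - b powr r\<bar> \<le> \<bar>a - b\<bar> powr r"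
  proof (cases "b \<le> a")
    case True
    then have "b powr r \<le> a powr r" using b r by (intro powr_mono2) auto
    then show ?thesis using main[OF b True] True by simp
  next
    case False
    then have "a powr r \<le> b powr r" using a r by (intro powr_mono2) auto
    then show ?thesis using main[OF a] False by simp
  qed
  also have "\<dots> \<le> e powr r" using e r by (intro powr_mono2) auto
  finally show ?thesis .
qed

theorem corollary4p6:
  fixes \<sigma> :: "real \<Rightarrow> real" and \<Sigma> :: "real interval \<Rightarrow> real interval"
    and W :: "nat \<Rightarrow> nat \<Rightarrow> nat \<Rightarrow> real" and b :: "nat \<Rightarrow> nat \<Rightarrow> real"
    and d :: "nat \<Rightarrow> nat" and L :: nat
    and p \<theta> \<rho> :: real and \<Omega> :: box
  assumes cont: "continuous_on UNIV \<sigma>"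
    and encl: "real_enclosure \<sigma> \<Sigma>"
    and hold: "\<exists>C \<gamma>. C > 0 \<and> 0 < \<gamma> \<and> \<gamma> \<le> 1 \<and> real_holder \<Sigma> C \<gamma>"
    and p: "1 \<le> p"
    and theta: "0 < \<theta>" "\<theta> < 1"
    and rho: "0 < \<rho>" "\<rho> < 1"
    and Omega_dim: "length \<Omega> = d 0"
    and Omega_int: "\<forall>j<d 0. lower (\<Omega> ! j) < upper (\<Omega> ! j)"
  shows "continuous_on UNIV (f_Phi \<sigma> W b d L p)
    \<and> box_enclosure (d 0) \<Omega> (f_Phi \<sigma> W b d L p) (F_Phi \<Sigma> W b d L p)
    \<and> (\<exists>C \<gamma>. C > 0 \<and> 0 < \<gamma> \<and> \<gamma> \<le> 1 \<and> box_holder (d 0) \<Omega> (F_Phi \<Sigma> W b d L p) C \<gamma>)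
    \<and> (\<forall>C \<gamma> rule. C > 0 \<longrightarrow> 0 < \<gamma> \<longrightarrow> \<gamma> \<le> 1
         \<longrightarrow> box_holder (d 0) \<Omega> (F_Phi \<Sigma> W b d L p) C \<gamma>
         \<longrightarrow> valid_quad_rule (d 0) rule
         \<longrightarrow> (\<forall>n.
               \<bar>Lp_norm_nn \<sigma> W b d L p \<Omega>
                  - adaquad_Q (f_Phi \<sigma> W b d L p) (F_Phi \<Sigma> W b d L p) rule \<theta> \<rho> C \<gamma> \<Omega> n powr (1 / p)\<bar>
                 \<le> adaquad_eta (F_Phi \<Sigma> W b d L p) \<theta> \<rho> C \<gamma> \<Omega> n powr (1 / p)
             \<and> adaquad_eta (F_Phi \<Sigma> W b d L p) \<theta> \<rho> C \<gamma> \<Omega> (Suc n)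
                 \<le> (1 - \<theta> * (1 - \<rho>)) * adaquad_eta (F_Phi \<Sigma> W b d L p) \<theta> \<rho> C \<gamma> \<Omega> n))"
proof (intro conjI allI impI)
  let ?f = "f_Phi \<sigma> W b d L p" and ?F = "F_Phi \<Sigma> W b d L p"
  have \<Omega>: "nondegenerate_box (d 0) \<Omega>"
    using Omega_dim Omega_int by (simp add: nondegenerate_box_def)
  show "continuous_on UNIV ?f" using cont p by (rule continuous_on_f_Phi)
  show enclosure: "box_enclosure (d 0) \<Omega> ?f ?F"
    using encl p Omega_dim by (intro box_enclosure_F_Phi) auto
  show "\<exists>C \<gamma>. C > 0 \<and> 0 < \<gamma> \<and> \<gamma> \<le> 1 \<and> box_holder (d 0) \<Omega> ?F C \<gamma>"
    using encl hold p Omega_dim by (rule box_holder_F_Phi)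
  fix C \<gamma> :: real and rule n
  assume C: "C > 0" and \<gamma>: "0 < \<gamma>" "\<gamma> \<le> 1" and holder: "box_holder (d 0) \<Omega> ?F C \<gamma>"
    and rule: "valid_quad_rule (d 0) rule"
  show "adaquad_eta ?F \<theta> \<rho> C \<gamma> \<Omega> (Suc n) \<le> (1 - \<theta> * (1 - \<rho>)) * adaquad_eta ?F \<theta> \<rho> C \<gamma> \<Omega> n"
    using holder C \<gamma> rho theta \<Omega> by (intro adaquad_eta_Suc_le) auto
  let ?A = "LINT x:set_box \<Omega>|lebesgue_d (d 0). ?f x"
  let ?Q = "adaquad_Q ?f ?F rule \<theta> \<rho> C \<gamma> \<Omega> n" and ?E = "adaquad_eta ?F \<theta> \<rho> C \<gamma> \<Omega> n"
  have "\<bar>?A - ?Q\<bar> \<le> ?E"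
    using enclosure f_Phi_measurable[OF cont] rule C rho(1) \<Omega> by (rule adaquad_Q_error)
  moreover have "0 \<le> ?A" by (simp add: set_lebesgue_integral_def f_Phi_nonneg)
  moreover have "0 \<le> ?Q" using rule f_Phi_nonneg C rho(1) \<Omega> by (rule adaquad_Q_nonneg)
  ultimately have "\<bar>?A powr (1 / p) - ?Q powr (1 / p)\<bar> \<le> ?E powr (1 / p)"
    using p by (intro abs_powr_diff_le) auto
  then show "\<bar>Lp_norm_nn \<sigma> W b d L p \<Omega> - ?Q powr (1 / p)\<bar> \<le> ?E powr (1 / p)"
    using Lp_norm_nn_eq[where d = d and W = W and b = b and L = L, OF cont encl _ Omega_dim] p
    by simp
qed

end
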